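(* Let $3\le s\le t\le u$ be integers. (i) If $4\le s\le t\le u$, then $S(3;s,t,u)\ge stu-tu-u-1$. (ii) If either $3=t<u$ or $3<t\le u$, then $S(3;3,t,u)>2tu-u-1$.
   Context: For an integer $k\ge 3$, let $\mathcal{L}(k)$ denote the equation $x_1+x_2+\cdots+x_{k-1}=x_k$ in positive integer variables (the $x_i$ need not be distinct). For $N\ge1$, write $[1,N]=\{1,2,\dots,N\}$. For integers $r\ge1$ and $k_0,\dots,k_{r-1}\ge 3$, the generalized Schur number $S(r;k_0,\dots,k_{r-1})$ is the least positive integer $N$ such that for every coloring $\Delta:[1,N]\to\{0,1,\dots,r-1\}$ there exist some $i\in\{0,\dots,r-1\}$ and positive integers $x_1,\dots,x_{k_i}\in[1,N]$ satisfying $\mathcal{L}(k_i)$ with $\Delta(x_1)=\cdots=\Delta(x_{k_i})=i$. Thus $S(3;s,t,u)$ is the least $N$ such that every 3-coloring of $[1,N]$ has a monochromatic solution to $\mathcal{L}(s)$ in the first color, to $\mathcal{L}(t)$ in the second color, or to $\mathcal{L}(u)$ in the third color. *)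

theory Defs
  imports Main "HOL-Library.Extended_Nat"
begin

text \<open>Colour i (i < length ks) is required to avoid monochromatic solutions of
  x_1 + ... + x_{k-1} = x_k with k = ks ! i.  A solution is given by a function
  x on the indices 1..k.\<close>

definition mono_sol :: "nat \<Rightarrow> (nat \<Rightarrow> nat) \<Rightarrow> nat list \<Rightarrow> bool" where
  "mono_sol N \<Delta> ks \<longleftrightarrow>
     (\<exists>i < length ks. \<exists>x :: nat \<Rightarrow> nat.
        (\<forall>j \<in> {1..ks ! i}. x j \<in> {1..N} \<and> \<Delta> (x j) = i) \<and>
        (\<Sum>j = 1..ks ! i - 1. x j) = x (ks ! i))"

definition schur_prop :: "nat list \<Rightarrow> nat \<Rightarrow> bool" where
  "schur_prop ks N \<longleftrightarrow>
     (\<forall>\<Delta> :: nat \<Rightarrow> nat. (\<forall>n \<in> {1..N}. \<Delta> n < length ks) \<longrightarrow> mono_sol N \<Delta> ks)"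

text \<open>Generalized Schur number S(r; k_0,...,k_{r-1}) with r = length ks:
  least positive N with the property; \<infinity> if there is none.\<close>
definition schur :: "nat list \<Rightarrow> enat" where
  "schur ks = (INF N \<in> {N. N \<ge> 1 \<and> schur_prop ks N}. enat N)"

end

theory Submission
  imports Defs
begin

(* Each bound comes from a colouring of [1, N] whose i-th colour class contains no solution
   of L(k_i).  For (i) put q = s - 1, m = t q - 1, T = (u - 1) m - 1, S0 = [1, q) \<union> (m - q, m)
   and S1 = [q, m - q].  Sums of s - 1 elements of S0 land in S1 or in [m, T], sums of t - 1
   elements of S1 land in (m - q, T], and sums of u - 1 elements of [m, T] exceed T.  Adding
   the translate T + S to such a class S keeps it free: a sum with one translated summand is
   T plus a sum that avoids S, a sum with two exceeds 2 T.  So S0 \<union> (T + S0), S1 \<union> (T + S1)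
   and [m, T] colour [1, T + m - 1], and T + m = s t u - t u - u - 1.  For (ii) the classes
   are unions of intervals and parity classes: a sum of many odd numbers has a prescribed
   parity, and a sum of many elements is large.  The cases (t, u) = (3, 4), (3, 5), (3, 6)
   use explicit colourings verified by evaluation. *)

section \<open>Sum-free colour classes\<close>

(* sum_free n A: A contains no solution of L(n + 1). *)
definition sum_free :: "nat \<Rightarrow> nat set \<Rightarrow> bool" where
  "sum_free n A \<longleftrightarrow> (\<forall>x. (\<forall>j\<in>{1..n}. x j \<in> A) \<longrightarrow> (\<Sum>j=1..n. x j) \<notin> A)"

lemma sum_freeI:
  assumes "\<And>x. \<forall>j\<in>{1..n}. x j \<in> A \<Longrightarrow> (\<Sum>j=1..n. x j) \<in> A \<Longrightarrow> False"
  shows "sum_free n A"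
  using assms unfolding sum_free_def by blast

lemma sum_free_2_iff: "sum_free 2 A \<longleftrightarrow> (\<forall>x\<in>A. \<forall>y\<in>A. x + y \<notin> A)"
proof
  assume free: "sum_free 2 A"
  show "\<forall>x\<in>A. \<forall>y\<in>A. x + y \<notin> A"
  proof (intro ballI)
    fix x y assume "x \<in> A" "y \<in> A"
    then show "x + y \<notin> A"
      using free unfolding sum_free_def
      by (auto dest!: spec[of _ "\<lambda>j. if j = 1 then x else y"] simp: numeral_2_eq_2)
  qed
next
  assume "\<forall>x\<in>A. \<forall>y\<in>A. x + y \<notin> A"
  then show "sum_free 2 A"
    unfolding sum_free_def by (simp add: numeral_2_eq_2)
qed

lemma zero_notin_if_sum_free: "sum_free n A \<Longrightarrow> 0 \<notin> A"
  unfolding sum_free_def by (metis (no_types) sum.neutral_const)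

lemma not_mono_sol_if_sum_free_classes:
  assumes pos: "0 \<notin> set ks"
    and free: "list_all2 (\<lambda>k A. sum_free (k - 1) A) ks As"
    and colour: "\<forall>n\<in>{1..M}. \<Delta> n < length ks \<and> n \<in> As ! \<Delta> n"
  shows "\<not> mono_sol M \<Delta> ks"
proof
  assume "mono_sol M \<Delta> ks"
  then obtain i x where i: "i < length ks"
    and x: "\<forall>j\<in>{1..ks ! i}. x j \<in> {1..M} \<and> \<Delta> (x j) = i"
    and sol: "(\<Sum>j=1..ks ! i - 1. x j) = x (ks ! i)"
    unfolding mono_sol_def by blast
  have in_class: "x j \<in> As ! i" if "j \<in> {1..ks ! i}" for j
    using x colour that by metis
  have "sum_free (ks ! i - 1) (As ! i)"
    using list_all2_nthD[OF free i] by simp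
  moreover have "\<forall>j\<in>{1..ks ! i - 1}. x j \<in> As ! i"
    using in_class by auto
  ultimately have "(\<Sum>j=1..ks ! i - 1. x j) \<notin> As ! i"
    unfolding sum_free_def by blast
  moreover have "ks ! i \<noteq> 0"
    using pos i by (metis nth_mem)
  then have "x (ks ! i) \<in> As ! i"
    using in_class by simp
  ultimately show False
    using sol by simp
qed

lemma schur_gt_if_sum_free_cover:
  assumes pos: "0 \<notin> set ks"
    and free: "list_all2 (\<lambda>k A. sum_free (k - 1) A) ks As"
    and cover: "{1..N} \<subseteq> \<Union>(set As)"
  shows "enat N < schur ks"
proof -
  have "\<forall>n\<in>{1..N}. \<exists>i<length ks. n \<in> As ! i"
    using cover list_all2_lengthD[OF free] by (fastforce simp: in_set_conv_nth)
  then obtain \<Delta> where \<Delta>: "\<forall>n\<in>{1..N}. \<Delta> n < length ks \<and> n \<in> As ! \<Delta> n"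
    by metis
  have "enat (Suc N) \<le> schur ks"
    unfolding schur_def
  proof (rule INF_greatest)
    fix M assume M: "M \<in> {N. 1 \<le> N \<and> schur_prop ks N}"
    show "enat (Suc N) \<le> enat M"
    proof (rule ccontr)
      assume "\<not> enat (Suc N) \<le> enat M"
      then have "\<forall>n\<in>{1..M}. \<Delta> n < length ks \<and> n \<in> As ! \<Delta> n"
        using \<Delta> by auto
      then show False
        using M not_mono_sol_if_sum_free_classes[OF pos free] unfolding schur_prop_def by blast
    qed
  qed
  then show ?thesis
    by (simp add: Suc_ile_eq)
qed

lemma sum_ge_with_large_term:
  fixes x :: "'a \<Rightarrow> nat"
  assumes "finite A" "a \<in> A" "\<forall>j\<in>A. m \<le> x j" "M \<le> x a"
  shows "M + (card A - 1) * m \<le> sum x A"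
proof -
  have "card (A - {a}) * m \<le> sum x (A - {a})"
    using sum_bounded_below[of "A - {a}" m x] assms(3) by simp
  then show ?thesis
    using assms by (simp add: sum.remove)
qed

lemma sum_mem_atLeastAtMost:
  fixes x :: "'a \<Rightarrow> nat"
  assumes "\<forall>j\<in>A. x j \<in> {a..b}"
  shows "sum x A \<in> {card A * a..card A * b}"
  using assms sum_bounded_below[of A a x] sum_bounded_above[of A x b] by auto

lemma even_sum_odd_iff:
  fixes x :: "'a \<Rightarrow> nat"
  assumes "finite A" "\<forall>j\<in>A. odd (x j)"
  shows "even (sum x A) \<longleftrightarrow> even (card A)"
proof -
  have "{j\<in>A. odd (x j)} = A"
    using assms(2) by blast
  then show ?thesis
    using even_sum_iff[OF assms(1), of x] by simp
qed

lemma sum_free_atLeastAtMost: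
  assumes "b < n * a"
  shows "sum_free n {a..b}"
proof (rule sum_freeI)
  fix x assume "\<forall>j\<in>{1..n}. x j \<in> {a..b}" "(\<Sum>j=1..n. x j) \<in> {a..b}"
  then show False
    using sum_mem_atLeastAtMost[of "{1..n}" x a b] assms by auto
qed

lemma sum_split_shifted_terms:
  fixes T :: nat
  assumes "0 \<notin> S" "S \<subseteq> {..T}" "\<forall>j\<in>{1..n}. x j \<in> S \<union> (+) T ` S"
  obtains y k where "\<forall>j\<in>{1..n}. y j \<in> S" "k \<le> n"
    "(\<Sum>j=1..n. x j) = (\<Sum>j=1..n. y j) + k * T"
proof -
  define J where "J = {j\<in>{1..n}. T < x j}"
  define y where "y j = (if j \<in> J then x j - T else x j)" for j
  have "J \<subseteq> {1..n}"
    unfolding J_def by blast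
  have shifted: "T < v" if "v \<in> (+) T ` S" for v
    using that assms(1) by (auto intro: gr0I)
  have "\<forall>j\<in>{1..n}. y j \<in> S"
    using assms(2,3) shifted unfolding y_def J_def by fastforce
  moreover have "card J \<le> n"
    using card_mono[OF finite_atLeastAtMost \<open>J \<subseteq> {1..n}\<close>] by simp
  moreover have "(\<Sum>j=1..n. x j) = (\<Sum>j=1..n. y j + (if j \<in> J then T else 0))"
    by (rule sum.cong) (auto simp: y_def J_def)
  then have "(\<Sum>j=1..n. x j) = (\<Sum>j=1..n. y j) + card J * T"
    using \<open>J \<subseteq> {1..n}\<close> by (simp add: sum.distrib sum.If_cases Int_absorb1)
  ultimately show thesis
    using that by blast
qed

lemma sum_free_Un_shift:
  assumes bounded: "S \<subseteq> {..T}"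
    and free: "sum_free n S"
    and sums_bounded: "\<And>y. \<forall>j\<in>{1..n}. y j \<in> S \<Longrightarrow> (\<Sum>j=1..n. y j) \<le> T"
  shows "sum_free n (S \<union> (+) T ` S)"
proof (rule sum_freeI)
  fix x assume x: "\<forall>j\<in>{1..n}. x j \<in> S \<union> (+) T ` S"
    and sum_in: "(\<Sum>j=1..n. x j) \<in> S \<union> (+) T ` S"
  have "0 \<notin> S"
    using free by (rule zero_notin_if_sum_free)
  then have shifted: "T < v \<and> v \<le> 2 * T" if "v \<in> (+) T ` S" for v
    using that bounded by (auto intro: gr0I)
  obtain y k where y: "\<forall>j\<in>{1..n}. y j \<in> S" and "k \<le> n"
    and decomp: "(\<Sum>j=1..n. x j) = (\<Sum>j=1..n. y j) + k * T"
    using sum_split_shifted_terms[OF \<open>0 \<notin> S\<close> bounded x] by blast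
  have y_sum_notin: "(\<Sum>j=1..n. y j) \<notin> S"
    using free y unfolding sum_free_def by blast
  have y_sum_le: "(\<Sum>j=1..n. y j) \<le> T"
    using sums_bounded y .
  have y_sum_pos: "(\<Sum>j=1..n. y j) \<noteq> 0" if "k \<noteq> 0"
  proof -
    have "1 \<in> {1..n}"
      using that \<open>k \<le> n\<close> by simp
    then have "y 1 \<noteq> 0"
      using y \<open>0 \<notin> S\<close> by metis
    then show ?thesis
      using \<open>1 \<in> {1..n}\<close> sum_eq_0_iff[of "{1..n}" y] by auto
  qed
  have sum_le: "(\<Sum>j=1..n. x j) \<le> 2 * T"
    using sum_in bounded shifted by fastforce
  consider "k = 0" | "k = 1" | "k \<ge> 2" by linarith
  then show False
  proof cases
    case 1
    then show False
      using decomp y_sum_notin y_sum_le sum_in shifted by fastforce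
  next
    case 2
    then show False
      using decomp y_sum_notin y_sum_pos sum_in bounded by fastforce
  next
    case 3
    then have "2 * T \<le> k * T" and "(\<Sum>j=1..n. y j) \<noteq> 0"
      using y_sum_pos by (simp_all add: mult_right_mono)
    then show False
      using decomp sum_le by linarith
  qed
qed

lemma sum_free_atLeastAtMost_Un_shift:
  fixes a b n T :: nat
  assumes "b < n * a" "n * b \<le> T" "b \<le> T"
  shows "sum_free n ({a..b} \<union> (+) T ` {a..b})"
proof (rule sum_free_Un_shift)
  show "sum_free n {a..b}"
    using assms(1) by (rule sum_free_atLeastAtMost)
  show "(\<Sum>j=1..n. y j) \<le> T" if "\<forall>j\<in>{1..n}. y j \<in> {a..b}" for y
    using sum_mem_atLeastAtMost[of "{1..n}" y a b] that assms(2) by auto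
qed (use assms(3) in auto)

section \<open>The bound s t u - t u - u - 1\<close>

lemma atLeastAtMost_subset_Un_shift:
  fixes m T :: nat
  assumes "{1..<m} \<subseteq> S"
  shows "{1..T + m - 1} \<subseteq> S \<union> (+) T ` S \<union> {m..T}"
proof
  fix n assume n: "n \<in> {1..T + m - 1}"
  show "n \<in> S \<union> (+) T ` S \<union> {m..T}"
  proof (cases "T < n")
    case True
    then have "n - T \<in> {1..<m}"
      using n by auto
    then have "n - T \<in> S"
      using assms by blast
    then have "T + (n - T) \<in> (+) T ` S"
      by blast
    then show ?thesis
      using True by simp
  next
    case False
    then show ?thesis
      using n assms by fastforce
  qed
qed

lemma sum_mem_low_high:
  fixes y :: "nat \<Rightarrow> nat"
  assumes "1 \<le> q" "q \<le> m" "q * (q - 1) \<le> m - q"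
    and y: "\<forall>j\<in>{1..q}. y j \<in> {1..<q} \<union> {m - q<..<m}"
  shows "(\<Sum>j=1..q. y j) \<in> {q..m - q} \<union> {m..q * (m - 1)}"
proof (cases "\<exists>j0\<in>{1..q}. m - q < y j0")
  case True
  then obtain j0 where "j0 \<in> {1..q}" "m - q + 1 \<le> y j0"
    by auto
  then have "m - q + 1 + (card {1..q} - 1) * 1 \<le> (\<Sum>j=1..q. y j)"
    using y by (intro sum_ge_with_large_term) auto
  moreover have "(\<Sum>j=1..q. y j) \<le> q * (m - 1)"
    using y assms(2) sum_mem_atLeastAtMost[of "{1..q}" y 1 "m - 1"] by fastforce
  ultimately show ?thesis
    using assms(1) by auto
next
  case False
  then have "(\<Sum>j=1..q. y j) \<in> {q * 1..q * (q - 1)}"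
    using y sum_mem_atLeastAtMost[of "{1..q}" y 1 "q - 1"] by fastforce
  then show ?thesis
    using assms(3) by auto
qed

lemma sum_free_low_high_Un_shift:
  fixes q m T :: nat
  assumes "1 \<le> q" "q \<le> m" "q * (q - 1) \<le> m - q" "q * (m - 1) \<le> T" "m - 1 \<le> T"
  defines "S \<equiv> {1..<q} \<union> {m - q<..<m}"
  shows "sum_free q (S \<union> (+) T ` S)"
proof (rule sum_free_Un_shift)
  note sums = sum_mem_low_high[OF assms(1-3), folded S_def]
  show "S \<subseteq> {..T}"
    unfolding S_def using assms(2,5) by auto
  show "sum_free q S"
  proof (rule sum_freeI)
    fix y assume "\<forall>j\<in>{1..q}. y j \<in> S" "(\<Sum>j=1..q. y j) \<in> S"
    then show False
      using sums[of y] assms(2) unfolding S_def by auto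
  qed
  show "(\<Sum>j=1..q. y j) \<le> T" if "\<forall>j\<in>{1..q}. y j \<in> S" for y
  proof -
    have "m - q \<le> T"
      using assms(1,5) by linarith
    then show ?thesis
      using sums[OF that] assms(4) by auto
  qed
qed

lemma stu_construction_bounds:
  fixes q t u m T :: nat
  assumes q: "1 \<le> q" "q < t" "t \<le> u"
    and m_def: "m = t * q - 1" and T_def: "T = (u - 1) * m - 1"
  shows "q \<le> m" "m - q < (t - 1) * q" "q * (q - 1) \<le> m - q"
    "q * (m - 1) \<le> T" "(t - 1) * (m - q) \<le> T" "m - 1 \<le> T"
    "m + 1 = t * q" "T + 1 = (u - 1) * m"
proof -
  have "2 * q \<le> t * q"
    using q by simp
  then show tq: "m + 1 = t * q"
    unfolding m_def using q by linarith
  have "(t - 1) * q + q = t * q"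
    using q by (simp add: diff_mult_distrib)
  moreover have "1 * q \<le> (t - 1) * q"
    using q by (intro mult_le_mono1) simp
  ultimately have m: "q \<le> m" "(t - 1) * q = m - q + 1"
    using tq by linarith+
  then show "q \<le> m" "m - q < (t - 1) * q"
    by simp_all
  have "q * (q - 1) < (t - 1) * q"
    using q by (subst mult.commute) (intro mult_strict_left_mono, auto)
  then show "q * (q - 1) \<le> m - q"
    using m(2) by linarith
  have u: "1 \<le> u - 1" and "1 \<le> m"
    using q m(1) by simp_all
  then have "1 * 1 \<le> (u - 1) * m"
    by (intro mult_le_mono)
  then show T: "T + 1 = (u - 1) * m"
    unfolding T_def by linarith
  have "(u - 1) * (m - 1) + (u - 1) = (u - 1) * (m - 1 + 1)"
    by (simp only: add_mult_distrib2 mult_1_right)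
  also have "m - 1 + 1 = m"
    using \<open>1 \<le> m\<close> by simp
  finally have "(u - 1) * (m - 1) + (u - 1) = (u - 1) * m" .
  moreover have "q * (m - 1) \<le> (u - 1) * (m - 1)" "(t - 1) * (m - q) \<le> (u - 1) * (m - 1)"
    using q m by (auto intro!: mult_mono)
  ultimately show "q * (m - 1) \<le> T" "(t - 1) * (m - q) \<le> T"
    using T u by linarith+
  have "m \<le> (u - 1) * m"
    using u by simp
  then show "m - 1 \<le> T"
    using T by linarith
qed

lemma stu_construction_size:
  fixes q t u m T :: nat
  assumes "1 \<le> u" "m + 1 = t * q" "T + 1 = (u - 1) * m"
  shows "(q + 1) * t * u - t * u - u - 1 = T + m"
proof -
  have "(q + 1) * t * u = u * (m + 1) + t * u"
    unfolding assms(2) by (simp add: algebra_simps)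
  also have "\<dots> = u * m + u + t * u"
    by (simp add: algebra_simps)
  also have "u * m = (u - 1) * m + m"
    using assms(1) by (cases u) simp_all
  also have "(u - 1) * m + m + u + t * u = (T + 1) + m + u + t * u"
    unfolding assms(3) ..
  finally show ?thesis
    by simp
qed

lemma schur_stu_lower_bound:
  fixes s t u :: nat
  assumes "2 \<le> s" "s \<le> t" "t \<le> u"
  shows "enat (s * t * u - t * u - u - 1) \<le> schur [s, t, u]"
proof -
  define q m T where "q = s - 1" and "m = t * q - 1" and "T = (u - 1) * m - 1"
  define S0 S1 where "S0 = {1..<q} \<union> {m - q<..<m}" and "S1 = {q..m - q}"
  have q: "1 \<le> q" "q < t" "t \<le> u"
    using assms unfolding q_def by auto
  note bounds = stu_construction_bounds[OF q m_def T_def]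
  have S0_free: "sum_free q (S0 \<union> (+) T ` S0)"
    unfolding S0_def using q(1) bounds(1,3,4,6) by (rule sum_free_low_high_Un_shift)
  have S1_free: "sum_free (t - 1) (S1 \<union> (+) T ` S1)"
    unfolding S1_def using bounds(2,5,6) q(1) by (intro sum_free_atLeastAtMost_Un_shift) linarith+
  have C2_free: "sum_free (u - 1) {m..T}"
    using bounds(8) by (intro sum_free_atLeastAtMost) (simp add: mult.commute)
  have "{1..<m} \<subseteq> S0 \<union> S1"
    unfolding S0_def S1_def by auto
  then have "{1..T + m - 1} \<subseteq> (S0 \<union> (+) T ` S0) \<union> (S1 \<union> (+) T ` S1) \<union> {m..T}"
    using atLeastAtMost_subset_Un_shift[of m "S0 \<union> S1" T] by (simp add: image_Un Un_ac)
  moreover have "s = q + 1"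
    using assms unfolding q_def by simp
  ultimately have "enat (T + m - 1) < schur [s, t, u]"
    using S0_free S1_free C2_free q
    by (intro schur_gt_if_sum_free_cover[where As = "[S0 \<union> (+) T ` S0, S1 \<union> (+) T ` S1, {m..T}]"])
      (simp_all add: Un_ac)
  moreover have "Suc (T + m - 1) = T + m"
    using bounds(1) q(1) by linarith
  ultimately have "enat (T + m) \<le> schur [s, t, u]"
    by (metis Suc_ile_eq)
  moreover have "(q + 1) * t * u - t * u - u - 1 = T + m"
    using q bounds(7,8) by (intro stu_construction_size) simp_all
  ultimately show ?thesis
    unfolding \<open>s = q + 1\<close> by simp
qed


section \<open>The bound 2 t u - u - 1 for s = 3\<close>

lemma sum_free_odd_Un_large:
  fixes a n N0 :: nat
  assumes "1 \<le> a" "2 \<le> n" and large: "2 * a + (n - 1) * (a + 1) = N0 + 1"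
  shows "sum_free n ({v\<in>{a + 1..2 * a - 1}. odd v} \<union> {2 * a..<n * (a + 1)}
    \<union> {v\<in>{n * (a + 1)..N0}. odd (v + n)})" (is "sum_free n ?W")
proof (rule sum_freeI)
  fix x assume x: "\<forall>j\<in>{1..n}. x j \<in> ?W" and sum_in: "(\<Sum>j=1..n. x j) \<in> ?W"
  have "2 * a + 2 \<le> n * (a + 1)"
    using assms(2) mult_le_mono1[of 2 n "a + 1"] by simp
  moreover have "n * (a + 1) = (n - 1) * (a + 1) + (a + 1)"
    using assms(2) by (cases n) auto
  ultimately have "?W \<subseteq> {a + 1..N0}"
    using assms by auto
  then have "\<forall>j\<in>{1..n}. x j \<in> {a + 1..N0}" "(\<Sum>j=1..n. x j) \<in> {a + 1..N0}"
    using x sum_in by blast+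
  then have x_ge: "\<forall>j\<in>{1..n}. a + 1 \<le> x j" and sum_le: "(\<Sum>j=1..n. x j) \<le> N0"
    by auto
  show False
  proof (cases "\<exists>j0\<in>{1..n}. 2 * a \<le> x j0")
    case True
    then obtain j0 where "j0 \<in> {1..n}" "2 * a \<le> x j0" ..
    then have "2 * a + (card {1..n} - 1) * (a + 1) \<le> (\<Sum>j=1..n. x j)"
      using x_ge by (intro sum_ge_with_large_term) auto
    then show False
      using large sum_le by simp
  next
    case False
    then have "\<forall>j\<in>{1..n}. odd (x j)"
      using x \<open>2 * a + 2 \<le> n * (a + 1)\<close> by fastforce
    then have "even (\<Sum>j=1..n. x j) \<longleftrightarrow> even n"
      using even_sum_odd_iff[of "{1..n}" x] by simp
    moreover have "n * (a + 1) \<le> (\<Sum>j=1..n. x j)"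
      using sum_bounded_below[of "{1..n}" "a + 1" x] x_ge by simp
    ultimately show False
      using sum_in \<open>2 * a + 2 \<le> n * (a + 1)\<close> by auto
  qed
qed

lemma sum_free_small_Un_large:
  fixes b n N0 N :: nat
  assumes "b \<le> N0" "N < N0 + 1 + (n - 1) * b"
    and disjoint: "{n * b..n * (n * b - 1)} \<inter> {N0<..N} = {}"
  shows "sum_free n ({b..<n * b} \<union> {N0<..N})"
proof (rule sum_freeI)
  fix x assume x: "\<forall>j\<in>{1..n}. x j \<in> {b..<n * b} \<union> {N0<..N}"
    and sum_in: "(\<Sum>j=1..n. x j) \<in> {b..<n * b} \<union> {N0<..N}"
  have x_ge: "\<forall>j\<in>{1..n}. b \<le> x j"
    using x assms(1) by fastforce
  show False
  proof (cases "\<exists>j0\<in>{1..n}. N0 < x j0")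
    case True
    then obtain j0 where "j0 \<in> {1..n}" "N0 + 1 \<le> x j0"
      by auto
    then have "N0 + 1 + (card {1..n} - 1) * b \<le> (\<Sum>j=1..n. x j)"
      using x_ge by (intro sum_ge_with_large_term) auto
    moreover have "n * b \<le> N0 + 1 + (n - 1) * b"
      using assms(1) by (cases n) auto
    ultimately show False
      using sum_in assms(2) by auto
  next
    case False
    then have "\<forall>j\<in>{1..n}. x j \<in> {b..n * b - 1}"
      using x by fastforce
    then have "(\<Sum>j=1..n. x j) \<in> {n * b..n * (n * b - 1)}"
      using sum_mem_atLeastAtMost[of "{1..n}" x b "n * b - 1"] by simp
    then show False
      using sum_in disjoint by auto
  qed
qed

lemma tu_construction_bounds:
  fixes t u a p N0 N :: nat
  assumes tu: "4 \<le> t" "t \<le> u"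
    and a_def: "a = 2 * u - 2" and p_def: "p = (t - 1) * (a + 1)" and N0_def: "N0 = p + a - 2"
    and N_def: "N = 2 * t * u - u - 1"
  shows "even a" "6 \<le> a" "(u - 1) * 2 = a" "3 * (a + 1) \<le> p" "odd t \<Longrightarrow> 4 * (a + 1) \<le> p"
    "2 * a + (t - 1 - 1) * (a + 1) = N0 + 1" "N < N0 + 1 + (u - 1 - 1) * 2"
    "{a..(u - 1) * (a - 1)} \<inter> {N0<..N} = {}"
proof -
  show a: "even a" "6 \<le> a" "(u - 1) * 2 = a"
    using tu unfolding a_def by auto
  have "3 \<le> t - 1" "odd t \<Longrightarrow> 4 \<le> t - 1"
    using tu by presburger+
  then show p: "3 * (a + 1) \<le> p" "odd t \<Longrightarrow> 4 * (a + 1) \<le> p"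
    unfolding p_def using mult_le_mono1 by blast+
  have "t - 1 = (t - 1 - 1) + 1" "t = (t - 1) + 1"
    using tu by simp_all
  then have p_split: "(t - 1 - 1) * (a + 1) + (a + 1) = p" "p + (a + 1) = t * (a + 1)"
    unfolding p_def by (metis add_mult_distrib mult_1)+
  then show "2 * a + (t - 1 - 1) * (a + 1) = N0 + 1"
    unfolding N0_def using a(2) by linarith
  have "a + 2 = 2 * u"
    using tu unfolding a_def by simp
  then have "t * (a + 1) + t = 2 * t * u"
    by (metis add_mult_distrib2 mult.assoc mult.commute nat_mult_1_right add.assoc one_add_one)
  moreover have "2 * 1 * u \<le> 2 * t * u"
    using tu by (intro mult_le_mono) auto
  ultimately have N: "N + u = N0 + t + 2"
    using p_split(2) a unfolding N_def N0_def by linarith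
  then show "N < N0 + 1 + (u - 1 - 1) * 2"
    using tu a(2) unfolding N0_def by linarith
  have "(u - 1) * (a - 1) \<le> N0 \<or> N \<le> N0"
  proof (cases "u \<le> t + 1")
    case True
    then have "(u - 1) * (a + 1) \<le> t * (a + 1)"
      by (intro mult_le_mono1) simp
    moreover have "(u - 1) * (a - 1) + (u - 1) * 2 = (u - 1) * (a + 1)"
      using a(2) by (simp add: add_mult_distrib2[symmetric])
    ultimately show ?thesis
      using a(2,3) p_split(2) unfolding N0_def by linarith
  next
    case False
    then show ?thesis
      using N by linarith
  qed
  then show "{a..(u - 1) * (a - 1)} \<inter> {N0<..N} = {}"
    by auto
qed

lemma schur_3_t_u_lower_bound:
  fixes t u :: nat
  assumes "4 \<le> t" "t \<le> u"
  shows "enat (2 * t * u - u - 1) < schur [3, t, u]"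
proof -
  define a p N0 N where "a = 2 * u - 2" and "p = (t - 1) * (a + 1)" and "N0 = p + a - 2"
    and "N = 2 * t * u - u - 1"
  define Z where "Z = {1} \<union> {v\<in>{a..2 * a - 2}. even v} \<union> {v\<in>{p..N0}. odd (v + t)}"
  define W where "W = {v\<in>{a + 1..2 * a - 1}. odd v} \<union> {2 * a..<p} \<union> {v\<in>{p..N0}. odd (v + (t - 1))}"
  define U where "U = {2..<a} \<union> {N0<..N}"
  note bounds = tu_construction_bounds[OF assms a_def p_def N0_def N_def]
  have Z_free: "sum_free 2 Z"
    unfolding sum_free_2_iff Z_def N0_def using bounds(1,2,4,5)
    by (cases "odd t") (auto simp: even_add)
  have W_free: "sum_free (t - 1) W"
    unfolding W_def p_def using assms bounds(2,6)
    by (intro sum_free_odd_Un_large) (auto simp: N0_def p_def)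
  have "2 \<le> N0"
    using bounds(2) unfolding N0_def by linarith
  then have U_free: "sum_free (u - 1) U"
    using sum_free_small_Un_large[of 2 N0 N "u - 1"] bounds(7,8) unfolding U_def bounds(3) by blast
  have "{1..N} \<subseteq> Z \<union> W \<union> U"
  proof
    fix n assume n: "n \<in> {1..N}"
    consider "n = 1" | "2 \<le> n \<and> n < a" | "a \<le> n \<and> n < 2 * a" | "2 * a \<le> n \<and> n < p"
      | "p \<le> n \<and> n \<le> N0" | "N0 < n"
      using n by (simp only: atLeastAtMost_iff) linarith
    then show "n \<in> Z \<union> W \<union> U"
    proof cases
      case 3
      obtain b where "a = 2 * b"
        using bounds(1) by blast
      then show ?thesis
        unfolding Z_def W_def using 3 by (cases "even n") (auto elim!: evenE oddE)
    next
      case 5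
      have "odd (n + t) \<or> odd (n + (t - 1))"
        using assms(1) by presburger
      then show ?thesis
        unfolding Z_def W_def using 5 by auto
    qed (use n in \<open>auto simp: Z_def W_def U_def\<close>)
  qed
  then show ?thesis
    using Z_free W_free U_free assms unfolding N_def
    by (intro schur_gt_if_sum_free_cover[where As = "[Z, W, U]"]) auto
qed


lemma sum_free_even_Un_odd:
  fixes n :: nat
  shows "sum_free n ({v\<in>{2..2 * n - 2}. even v} \<union> {v\<in>{2 * n + 1..4 * n - 3}. odd v})"
    (is "sum_free n ?U")
proof (rule sum_freeI)
  fix x assume x: "\<forall>j\<in>{1..n}. x j \<in> ?U" and sum_in: "(\<Sum>j=1..n. x j) \<in> ?U"
  have x_ge: "\<forall>j\<in>{1..n}. 2 \<le> x j"
    using x by fastforce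
  show False
  proof (cases "\<exists>j0\<in>{1..n}. odd (x j0)")
    case True
    then obtain j0 where "j0 \<in> {1..n}" "2 * n + 1 \<le> x j0"
      using x by fastforce
    then have "2 * n + 1 + (card {1..n} - 1) * 2 \<le> (\<Sum>j=1..n. x j)"
      using x_ge by (intro sum_ge_with_large_term) auto
    then show False
      using sum_in by auto
  next
    case False
    then have "even (\<Sum>j=1..n. x j)"
      by (auto intro: dvd_sum)
    moreover have "n * 2 \<le> (\<Sum>j=1..n. x j)"
      using sum_bounded_below[of "{1..n}" 2 x] x_ge by simp
    ultimately show False
      using sum_in by auto
  qed
qed

lemma schur_3_3_u_lower_bound:
  fixes u :: nat
  assumes "7 \<le> u"
  shows "enat (5 * u - 1) < schur [3, 3, u]"
proof -
  define N where "N = 5 * u - 1"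
  define Z0 where "Z0 = {v\<in>{1..2 * u - 3}. odd v} \<union> {v\<in>{4 * u - 4..N}. even v}"
  define Z1 where "Z1 = {v\<in>{2 * u - 2..4 * u - 6}. even v} \<union> {v\<in>{4 * u - 5..N}. odd v}"
  define U where "U = {v\<in>{2..2 * u - 4}. even v} \<union> {v\<in>{2 * u - 1..4 * u - 7}. odd v}"
  have Z0_free: "sum_free 2 Z0"
    unfolding sum_free_2_iff Z0_def N_def using assms by (auto simp: even_add)
  have Z1_free: "sum_free 2 Z1"
    unfolding sum_free_2_iff Z1_def N_def using assms by (auto simp: even_add)
  have "2 * (u - 1) - 2 = 2 * u - 4" "2 * (u - 1) + 1 = 2 * u - 1" "4 * (u - 1) - 3 = 4 * u - 7"
    using assms by auto
  then have U_free: "sum_free (u - 1) U"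
    using sum_free_even_Un_odd[of "u - 1"] unfolding U_def by simp
  have "{1..N} \<subseteq> Z0 \<union> Z1 \<union> U"
  proof
    fix n assume n: "n \<in> {1..N}"
    show "n \<in> Z0 \<union> Z1 \<union> U"
    proof (cases "even n")
      case True
      then obtain k where "n = 2 * k" ..
      then show ?thesis
        using assms n unfolding Z0_def Z1_def U_def N_def
        by (cases "k \<le> u - 2"; cases "k \<le> 2 * u - 3") auto
    next
      case False
      then obtain k where "n = 2 * k + 1"
        using oddE by blast
      then show ?thesis
        using assms n unfolding Z0_def Z1_def U_def N_def
        by (cases "k \<le> u - 2"; cases "k \<le> 2 * u - 4") auto
    qed
  qed
  then show ?thesis
    using Z0_free Z1_free U_free assms unfolding N_def
    by (intro schur_gt_if_sum_free_cover[where As = "[Z0, Z1, U]"]) auto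
qed

section \<open>Small cases by evaluation\<close>

fun sums_upto :: "nat \<Rightarrow> nat list \<Rightarrow> nat \<Rightarrow> nat list" where
  "sums_upto 0 A N = [0]"
| "sums_upto (Suc n) A N = remdups [v + a. v \<leftarrow> sums_upto n A N, a \<leftarrow> A, v + a \<le> N]"

lemma sum_mem_sums_upto:
  fixes x :: "nat \<Rightarrow> nat"
  assumes "\<forall>j\<in>{1..n}. x j \<in> set A" "(\<Sum>j=1..n. x j) \<le> N"
  shows "(\<Sum>j=1..n. x j) \<in> set (sums_upto n A N)"
  using assms
proof (induction n)
  case 0
  then show ?case by simp
next
  case (Suc n)
  then have "(\<Sum>j=1..n. x j) \<in> set (sums_upto n A N)"
    by simp
  moreover have "x (Suc n) \<in> set A"
    using Suc.prems(1) by simp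
  ultimately show ?case
    using Suc.prems(2) by force
qed

lemma schur_gt_if_sum_free_lists:
  assumes "0 \<notin> set ks"
    and "list_all2 (\<lambda>k A. list_all (\<lambda>v. v \<le> N) A
      \<and> list_all (\<lambda>v. v \<notin> set (sums_upto (k - 1) A N)) A) ks As"
    and "list_all (\<lambda>n. list_ex (\<lambda>A. n \<in> set A) As) [1..<Suc N]"
  shows "enat N < schur ks"
proof (rule schur_gt_if_sum_free_cover[where As = "map set As"])
  show "list_all2 (\<lambda>k A. sum_free (k - 1) A) ks (map set As)"
    using assms(2) unfolding list_all2_map2
  proof (rule list_all2_mono)
    fix k A
    assume A: "list_all (\<lambda>v. v \<le> N) A \<and> list_all (\<lambda>v. v \<notin> set (sums_upto (k - 1) A N)) A"
    show "sum_free (k - 1) (set A)"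
    proof (rule sum_freeI)
      fix x assume "\<forall>j\<in>{1..k - 1}. x j \<in> set A" "(\<Sum>j=1..k - 1. x j) \<in> set A"
      then show False
        using A sum_mem_sums_upto unfolding list_all_iff by blast
    qed
  qed
  show "{1..N} \<subseteq> \<Union> (set (map set As))"
    using assms(3) unfolding list_all_iff list_ex_iff by fastforce
qed (use assms(1) in simp)

lemma schur_3_3_4_gt: "enat 19 < schur [3, 3, 4]"
  by (rule schur_gt_if_sum_free_lists[where
        As = "[[1, 4, 6, 15, 17], [2, 3, 18, 19], [5, 7, 8, 9, 10, 11, 12, 13, 14, 16]]"]; code_simp)

lemma schur_3_3_5_gt: "enat 24 < schur [3, 3, 5]"
  by (rule schur_gt_if_sum_free_lists[where
        As = "[[1, 3, 5, 7, 9, 20, 22, 24], [2, 6, 11, 15, 16, 19, 23],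
               [4, 8, 10, 12, 13, 14, 17, 18, 21]]"]; code_simp)

lemma schur_3_3_6_gt: "enat 29 < schur [3, 3, 6]"
  by (rule schur_gt_if_sum_free_lists[where
        As = "[[1, 3, 5, 7, 9, 20, 22, 24, 26, 28], [2, 11, 29],
               [4, 6, 8, 10, 12, 13, 14, 15, 16, 17, 18, 19, 21, 23, 25, 27]]"]; code_simp)

theorem proposition1:
  fixes s t u :: nat
  shows "(4 \<le> s \<and> s \<le> t \<and> t \<le> u \<longrightarrow>
            schur [s, t, u] \<ge> enat (s * t * u - t * u - u - 1)) \<and>
         (((3 = t \<and> t < u) \<or> (3 < t \<and> t \<le> u)) \<longrightarrow>
            schur [3, t, u] > enat (2 * t * u - u - 1))"
proof (intro conjI impI)
  assume "4 \<le> s \<and> s \<le> t \<and> t \<le> u"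
  then show "schur [s, t, u] \<ge> enat (s * t * u - t * u - u - 1)"
    by (intro schur_stu_lower_bound) auto
next
  assume "(3 = t \<and> t < u) \<or> (3 < t \<and> t \<le> u)"
  then consider "4 \<le> t" "t \<le> u" | "t = 3" "u = 4" | "t = 3" "u = 5" | "t = 3" "u = 6"
    | "t = 3" "7 \<le> u"
    by linarith
  then show "schur [3, t, u] > enat (2 * t * u - u - 1)"
  proof cases
    case 5
    moreover have "2 * 3 * u - u - 1 = 5 * u - 1"
      by simp
    ultimately show ?thesis
      using schur_3_3_u_lower_bound by simp
  qed (use schur_3_t_u_lower_bound schur_3_3_4_gt schur_3_3_5_gt schur_3_3_6_gt in simp_all)
qed

end
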